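(* Let $X$ be an indiscrete topological space. Then for any starting points $m,l\in X$, the lion has a strategy in $X$ for the starting points $m$ (man) and $l$ (lion).
   Context: For a topological space $X$ and $x\in X$, let $P_x(X)$ be the set of continuous maps $\gamma:[0,+\infty)\to X$ with $\gamma(0)=x$. For $\gamma\in P_x(X)$ and $t\ge 0$, write $\gamma_{<t}=\gamma|_{[0,t)}$ and $\gamma_{\le t}=\gamma|_{[0,t]}$. Given starting points $m$ (man) and $l$ (lion) in $X$, a strategy for the lion is a function $S:P_m(X)\to P_l(X)$ such that (i) for each $\alpha\in P_m(X)$ there exists $t\ge 0$ with $S(\alpha)(t)=\alpha(t)$; and (ii) (no-lookahead rule) whenever $\alpha,\alpha'\in P_m(X)$ and $t\ge0$ satisfy $\alpha_{<t}=\alpha'_{<t}$, then $S(\alpha)_{\le t}=S(\alpha')_{\le t}$. The Axiom of Choice is assumed. *)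

theory Defs
  imports "HOL-Analysis.Analysis"
begin

definition indiscrete_space :: "'a topology \<Rightarrow> bool" where
  "indiscrete_space X \<longleftrightarrow> (\<forall>U. openin X U \<longleftrightarrow> U = {} \<or> U = topspace X)"

definition paths_from :: "'a topology \<Rightarrow> 'a \<Rightarrow> (real \<Rightarrow> 'a) set" where
  "paths_from X x = {\<gamma>. continuous_map (top_of_set {0..}) X \<gamma> \<and> \<gamma> 0 = x
                        \<and> (\<forall>t<0. \<gamma> t = undefined)}"

definition lion_strategy :: "'a topology \<Rightarrow> 'a \<Rightarrow> 'a \<Rightarrow> ((real \<Rightarrow> 'a) \<Rightarrow> (real \<Rightarrow> 'a)) \<Rightarrow> bool" where
  "lion_strategy X m l S \<longleftrightarrow>
     (\<forall>\<alpha>\<in>paths_from X m. S \<alpha> \<in> paths_from X l) \<and>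
     (\<forall>\<alpha>\<in>paths_from X m. \<exists>t\<ge>0. S \<alpha> t = \<alpha> t) \<and>
     (\<forall>\<alpha>\<in>paths_from X m. \<forall>\<alpha>'\<in>paths_from X m. \<forall>t\<ge>0.
        (\<forall>s\<in>{0..<t}. \<alpha> s = \<alpha>' s) \<longrightarrow> (\<forall>s\<in>{0..t}. S \<alpha> s = S \<alpha>' s))"

end

theory Submission
  imports Defs
begin

text \<open>Well-order all candidate paths of the man. At time \<open>t > 0\<close> the lion stands where the
  least man path agreeing with the actual one on \<open>[0,t)\<close> stands at time \<open>t\<close>; this only looks
  at the past, and in an indiscrete space every map is continuous. Along \<open>t = 1/(n+1)\<close> these
  least paths form a non-increasing sequence in the well-order, so two consecutive ones coincide,
  and at that moment the lion occupies the man's position.\<close>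

lemma continuous_map_into_indiscrete:
  assumes "indiscrete_space X" and "f \<in> topspace Y \<rightarrow> topspace X"
  shows "continuous_map Y X f"
  unfolding continuous_map_def
proof (intro conjI allI impI)
  show "f \<in> topspace Y \<rightarrow> topspace X" by (fact assms(2))
next
  fix U assume "openin X U"
  then have "U = {} \<or> U = topspace X"
    using assms(1) unfolding indiscrete_space_def by blast
  then have "{x \<in> topspace Y. f x \<in> U} = {} \<or> {x \<in> topspace Y. f x \<in> U} = topspace Y"
    using assms(2) by auto
  then show "openin Y {x \<in> topspace Y. f x \<in> U}" by (metis openin_empty openin_topspace)
qed

lemma (in wo_rel) minim_stabilises:
  assumes "Field r = UNIV" and "\<And>n. A n \<subseteq> A (Suc n)" and "A 0 \<noteq> {}"
  shows "\<exists>n. minim (A (Suc n)) = minim (A n)"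
proof (rule ccontr)
  assume "\<nexists>n. minim (A (Suc n)) = minim (A n)"
  moreover have "A n \<noteq> {}" for n
    using assms(3) lift_Suc_mono_le[of A, OF assms(2), of 0 n] by blast
  then have "(minim (A (Suc n)), minim (A n)) \<in> r" for n
    using minim_in[of "A n"] minim_least[of "A (Suc n)"] assms(1,2) by blast
  ultimately have "\<forall>n. (minim (A (Suc n)), minim (A n)) \<in> r - Id" by auto
  then have "\<exists>f. \<forall>n. (f (Suc n), f n) \<in> r - Id" by (rule exI[of _ "\<lambda>n. minim (A n)"])
  then show False using WF unfolding wf_iff_no_infinite_down_chain by blast
qed

definition paths_agreeing_before :: "'a topology \<Rightarrow> 'a \<Rightarrow> (real \<Rightarrow> 'a) \<Rightarrow> real \<Rightarrow> (real \<Rightarrow> 'a) set"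
  where "paths_agreeing_before X m \<alpha> t = {\<beta> \<in> paths_from X m. \<forall>s\<in>{0..<t}. \<beta> s = \<alpha> s}"

definition lion_chase ::
    "'a topology \<Rightarrow> 'a \<Rightarrow> 'a \<Rightarrow> (real \<Rightarrow> 'a) rel \<Rightarrow> (real \<Rightarrow> 'a) \<Rightarrow> real \<Rightarrow> 'a"
  where "lion_chase X m l r \<alpha> t =
    (if t < 0 then undefined else if t = 0 then l
     else wo_rel.minim r (paths_agreeing_before X m \<alpha> t) t)"

lemma paths_agreeing_before_antimono:
  "s \<le> t \<Longrightarrow> paths_agreeing_before X m \<alpha> t \<subseteq> paths_agreeing_before X m \<alpha> s"
  unfolding paths_agreeing_before_def by auto

lemma self_in_paths_agreeing_before:
  "\<alpha> \<in> paths_from X m \<Longrightarrow> \<alpha> \<in> paths_agreeing_before X m \<alpha> t"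
  unfolding paths_agreeing_before_def by simp

lemma paths_from_in_topspace:
  "\<beta> \<in> paths_from X m \<Longrightarrow> t \<ge> 0 \<Longrightarrow> \<beta> t \<in> topspace X"
  unfolding paths_from_def using continuous_map_image_subset_topspace by fastforce

lemma lion_chase_in_paths_from:
  assumes "indiscrete_space X" and "l \<in> topspace X"
    and "wo_rel r" and "Field r = UNIV" and "\<alpha> \<in> paths_from X m"
  shows "lion_chase X m l r \<alpha> \<in> paths_from X l"
proof -
  have "lion_chase X m l r \<alpha> t \<in> topspace X" if "t \<ge> 0" for t
  proof (cases "t = 0")
    case True
    then show ?thesis using assms(2) by (simp add: lion_chase_def)
  next
    case False
    have "wo_rel.minim r (paths_agreeing_before X m \<alpha> t) \<in> paths_agreeing_before X m \<alpha> t"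
      using wo_rel.minim_in[OF assms(3)] self_in_paths_agreeing_before[OF assms(5)]
        assms(4) by blast
    then show ?thesis
      using False that paths_from_in_topspace
      unfolding lion_chase_def paths_agreeing_before_def by auto
  qed
  then have "continuous_map (top_of_set {0..}) X (lion_chase X m l r \<alpha>)"
    by (intro continuous_map_into_indiscrete[OF assms(1)]) auto
  then show ?thesis by (simp add: paths_from_def lion_chase_def)
qed

lemma lion_chase_no_lookahead:
  assumes "\<forall>s\<in>{0..<t}. \<alpha> s = \<alpha>' s" and "s \<in> {0..t}"
  shows "lion_chase X m l r \<alpha> s = lion_chase X m l r \<alpha>' s"
proof -
  have "paths_agreeing_before X m \<alpha> s = paths_agreeing_before X m \<alpha>' s"
    using assms unfolding paths_agreeing_before_def by auto
  then show ?thesis by (simp add: lion_chase_def)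
qed

lemma lion_chase_catches:
  assumes "wo_rel r" and "Field r = UNIV" and "\<alpha> \<in> paths_from X m"
  shows "\<exists>t\<ge>0. lion_chase X m l r \<alpha> t = \<alpha> t"
proof -
  define A where "A n = paths_agreeing_before X m \<alpha> (1 / real (Suc n))" for n
  have "A n \<subseteq> A (Suc n)" for n
    unfolding A_def by (rule paths_agreeing_before_antimono) (simp add: frac_le)
  moreover have "A 0 \<noteq> {}"
    using self_in_paths_agreeing_before[OF assms(3)] unfolding A_def by blast
  ultimately obtain n where stable: "wo_rel.minim r (A (Suc n)) = wo_rel.minim r (A n)"
    using wo_rel.minim_stabilises[OF assms(1,2)] by blast
  define t where "t = 1 / real (Suc (Suc n))"
  have t: "0 < t" "t < 1 / real (Suc n)"
    unfolding t_def by (auto simp: frac_less2)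
  have "wo_rel.minim r (A n) \<in> A n"
    using wo_rel.minim_in[OF assms(1)] assms(2) self_in_paths_agreeing_before[OF assms(3)]
    unfolding A_def by blast
  then have "wo_rel.minim r (A n) t = \<alpha> t"
    using t unfolding A_def paths_agreeing_before_def by auto
  then have "lion_chase X m l r \<alpha> t = \<alpha> t"
    using t stable by (simp add: lion_chase_def A_def t_def)
  then show ?thesis using t by (intro exI[of _ t]) simp
qed

theorem mainTheorem3:
  fixes X :: "'a topology" and m l :: 'a
  assumes "indiscrete_space X" and "m \<in> topspace X" and "l \<in> topspace X"
  shows "\<exists>S. lion_strategy X m l S"
proof -
  obtain r :: "(real \<Rightarrow> 'a) rel" where "Well_order r" and field: "Field r = UNIV"
    using well_ordering[where 'a = "real \<Rightarrow> 'a"] by (elim exE conjE)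
  then have wo: "wo_rel r" by (simp add: wo_rel_def)
  have "lion_strategy X m l (lion_chase X m l r)"
    unfolding lion_strategy_def
  proof (intro conjI ballI allI impI)
    fix \<alpha> :: "real \<Rightarrow> 'a" assume "\<alpha> \<in> paths_from X m"
    then show "lion_chase X m l r \<alpha> \<in> paths_from X l"
      and "\<exists>t\<ge>0. lion_chase X m l r \<alpha> t = \<alpha> t"
      using lion_chase_in_paths_from[OF assms(1,3) wo field] lion_chase_catches[OF wo field]
      by blast+
  next
    fix \<alpha> \<alpha>' :: "real \<Rightarrow> 'a" and t s :: real
    assume "\<forall>s\<in>{0..<t}. \<alpha> s = \<alpha>' s" and "s \<in> {0..t}"
    then show "lion_chase X m l r \<alpha> s = lion_chase X m l r \<alpha>' s"
      by (rule lion_chase_no_lookahead)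
  qed
  then show ?thesis by blast
qed

end
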